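(* Let $\emptyset\neq I\subseteq\mathbb{R}^n$ and let $\mathcal{B}$ be a collection of non-empty subsets of $X$ covering $X$. (i) Let $\mathbb{D}\subseteq I$ be unbounded and suppose $A_I\neq\emptyset$. If a continuous $F:I\times X\to Y$ is $(\mathbb{D},\mathcal{B})$-slowly oscillating, then $F$ is $\mathbb{D}$-quasi-asymptotically $(\mathcal{B},I',1)$-almost periodic, where $I':=\bigcup_{\omega\in A_I}\omega\cdot\mathbb{N}$. (ii) Let $\mathbb{D}_j\subseteq I$ be unbounded for $j=1,\dots,n$. For each $\omega=(\omega_1,\dots,\omega_n)\in B_I$ let $\mathbb{D}_\omega$ be the set of all $\mathbf{t}\in\mathbb{D}_n$ such that $\mathbf{t}+\sum_{i=j+1}^n\omega_ie_i\in\mathbb{D}_j$ for all $j\in\{1,\dots,n-1\}$, and suppose each $\mathbb{D}_\omega$ is unbounded, that $\mathcal{D}:=\bigcap_{\omega\in B_I}\mathbb{D}_\omega$ is unbounded, and that $B_I\cap I\neq\emptyset$. Put $I':=\bigcup_{\omega\in B_I\cap I}\omega\cdot\mathbb{N}$. If $F:I\times X\to Y$ is $(\mathcal{B},(\mathbb{D}_j)_{j=1}^n)$-slowly oscillating, then $F$ is $\mathcal{D}$-quasi-asymptotically $(\mathcal{B},I',1)$-almost periodic.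
   Context: $X,Y$ complex Banach spaces; $e_1,\dots,e_n$ the standard basis of $\mathbb{R}^n$; $\omega\cdot\mathbb{N}=\{k\omega:k\in\mathbb{N}\}$; a tuple $(\omega_1,\dots,\omega_n)$ is identified with $\sum_j\omega_je_j$. $A_I:=\{\omega\in\mathbb{R}^n\setminus\{0\}:\omega+I\subseteq I\}$, $B_I:=\{(\omega_1,\dots,\omega_n)\in(\mathbb{R}\setminus\{0\})^n:\omega_je_j+I\subseteq I\text{ for all }j\}$. A continuous $F:I\times X\to Y$ is $(\mathbb{D},\mathcal{B})$-slowly oscillating if for each $B\in\mathcal{B}$ and $\omega\in A_I$, $\lim_{|\mathbf{t}|\to\infty,\mathbf{t}\in\mathbb{D}}\|F(\mathbf{t}+\omega;x)-F(\mathbf{t};x)\|_Y=0$ uniformly in $x\in B$. It is $(\mathcal{B},(\mathbb{D}_j)_{j=1}^n)$-slowly oscillating if for each $B\in\mathcal{B}$, $(\omega_1,\dots,\omega_n)\in B_I$ and $j$, $\lim_{|\mathbf{t}|\to\infty,\mathbf{t}\in\mathbb{D}_j}\|F(\mathbf{t}+\omega_je_j;x)-F(\mathbf{t};x)\|_Y=0$ uniformly in $x\in B$. For $\mathbb{D}\subseteq I$ unbounded, $I'$ unbounded with $I+I'\subseteq I$, $\mathbb{D}_M:=\{\mathbf{t}\in\mathbb{D}:|\mathbf{t}|\ge M\}$, a continuous $F$ is $\mathbb{D}$-quasi-asymptotically $(\mathcal{B},I',c)$-almost periodic if for every $B\in\mathcal{B}$ and $\epsilon>0$ there is $l>0$ such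 that for each $\mathbf{t}_0\in I'$ there is $\tau\in B(\mathbf{t}_0,l)\cap I'$ and a finite $M(\epsilon,\tau)>0$ with $\|F(\mathbf{t}+\tau;x)-cF(\mathbf{t};x)\|_Y\le\epsilon$ whenever $\mathbf{t},\mathbf{t}+\tau\in\mathbb{D}_{M(\epsilon,\tau)}$, $x\in B$. *)

theory Defs
  imports "HOL-Analysis.Analysis"
begin

text \<open>Points of R^n are vectors of type real ^ 'n; the index type is linearly ordered
  so that the ordering e_1, ..., e_n of the standard basis is available.
  The standard basis vector e_j is axis j 1.\<close>

definition A_set :: "(real ^ 'n) set \<Rightarrow> (real ^ 'n) set" where
  "A_set I = {\<omega>. \<omega> \<noteq> 0 \<and> (\<lambda>t. \<omega> + t) ` I \<subseteq> I}"

definition B_set :: "(real ^ 'n) set \<Rightarrow> (real ^ 'n) set" where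
  "B_set I = {\<omega>. (\<forall>j. \<omega> $ j \<noteq> 0) \<and> (\<forall>j. (\<lambda>t. (\<omega> $ j) *\<^sub>R axis j 1 + t) ` I \<subseteq> I)}"

definition mult_N :: "real ^ 'n \<Rightarrow> (real ^ 'n) set" where
  "mult_N \<omega> = {real k *\<^sub>R \<omega> | k. k \<ge> (1::nat)}"

definition cont_IX :: "(real ^ 'n) set \<Rightarrow> (real ^ 'n \<Rightarrow> 'x::real_normed_vector \<Rightarrow> 'y::real_normed_vector) \<Rightarrow> bool" where
  "cont_IX I F \<longleftrightarrow> continuous_on (I \<times> UNIV) (\<lambda>(t, x). F t x)"

definition slowly_osc_D ::
  "(real ^ 'n) set \<Rightarrow> (real ^ 'n) set \<Rightarrow> 'x set set \<Rightarrow>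
   (real ^ 'n \<Rightarrow> 'x::real_normed_vector \<Rightarrow> 'y::real_normed_vector) \<Rightarrow> bool" where
  "slowly_osc_D I D \<B> F \<longleftrightarrow> cont_IX I F \<and>
     (\<forall>B\<in>\<B>. \<forall>\<omega>\<in>A_set I. \<forall>\<epsilon>>0. \<exists>M. \<forall>t\<in>D. \<forall>x\<in>B.
        norm t \<ge> M \<longrightarrow> norm (F (t + \<omega>) x - F t x) < \<epsilon>)"

definition slowly_osc_Dj ::
  "(real ^ 'n) set \<Rightarrow> ('n \<Rightarrow> (real ^ 'n) set) \<Rightarrow> 'x set set \<Rightarrow>
   (real ^ 'n \<Rightarrow> 'x::real_normed_vector \<Rightarrow> 'y::real_normed_vector) \<Rightarrow> bool" where
  "slowly_osc_Dj I D \<B> F \<longleftrightarrow> cont_IX I F \<and>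
     (\<forall>B\<in>\<B>. \<forall>\<omega>\<in>B_set I. \<forall>j. \<forall>\<epsilon>>0. \<exists>M. \<forall>t\<in>D j. \<forall>x\<in>B.
        norm t \<ge> M \<longrightarrow> norm (F (t + (\<omega> $ j) *\<^sub>R axis j 1) x - F t x) < \<epsilon>)"

text \<open>D-quasi-asymptotically (B, I', c)-almost periodic, including the standing
  requirements of the definition (D subset of I unbounded, I' unbounded, I + I' subset of I).\<close>
definition quasi_asymp_ap ::
  "(real ^ 'n) set \<Rightarrow> (real ^ 'n) set \<Rightarrow> 'x set set \<Rightarrow> (real ^ 'n) set \<Rightarrow> real \<Rightarrow>
   (real ^ 'n \<Rightarrow> 'x::real_normed_vector \<Rightarrow> 'y::real_normed_vector) \<Rightarrow> bool" where
  "quasi_asymp_ap I D \<B> I' c F \<longleftrightarrow>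
     D \<subseteq> I \<and> \<not> bounded D \<and> \<not> bounded I' \<and> (\<forall>t\<in>I. \<forall>s\<in>I'. t + s \<in> I) \<and> cont_IX I F \<and>
     (\<forall>B\<in>\<B>. \<forall>\<epsilon>>0. \<exists>l>0. \<forall>t0\<in>I'. \<exists>\<tau>\<in>ball t0 l \<inter> I'. \<exists>M>0.
        \<forall>t x. t \<in> D \<and> norm t \<ge> M \<and> t + \<tau> \<in> D \<and> norm (t + \<tau>) \<ge> M \<and> x \<in> B \<longrightarrow>
          norm (F (t + \<tau>) x - c *\<^sub>R F t x) \<le> \<epsilon>)"

end

(*
  In both parts every tau in I' serves as its own almost period, so the ball
  radius l = 1 works for all t0.  For (i) the estimate at tau is literally the
  slow oscillation of F in the direction tau, since I' is contained in A_I.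
  For (ii) one walks from t to t + tau one coordinate at a time, from the
  last coordinate down to the first: the j-th intermediate point lies in D_j by
  the definition of the sets D_omega, stays within a fixed distance of t, and
  so slow oscillation along e_j bounds each of the n increments by eps / n.
*)
theory Submission
  imports Defs
begin

lemma translate_closed_scaleR_nat:
  fixes v :: "'a::real_vector"
  assumes "(\<lambda>t. v + t) ` I \<subseteq> I"
  shows "(\<lambda>t. real k *\<^sub>R v + t) ` I \<subseteq> I"
proof (induction k)
  case 0
  then show ?case by simp
next
  case (Suc k)
  show ?case
  proof (rule image_subsetI)
    fix t assume "t \<in> I"
    then have "v + (real k *\<^sub>R v + t) \<in> I" using Suc assms by blast
    then show "real (Suc k) *\<^sub>R v + t \<in> I" by (simp add: algebra_simps)
  qed
qed

lemma translate_closed_sum: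
  fixes v :: "'i \<Rightarrow> 'a::real_vector"
  assumes "finite S" "\<And>j. j \<in> S \<Longrightarrow> (\<lambda>t. v j + t) ` I \<subseteq> I"
  shows "(\<lambda>t. sum v S + t) ` I \<subseteq> I"
  using assms
proof (induction S rule: finite_induct)
  case empty
  then show ?case by simp
next
  case (insert j S)
  show ?case
  proof (rule image_subsetI)
    fix t assume "t \<in> I"
    then have "v j + (sum v S + t) \<in> I" using insert by blast
    then show "sum v (insert j S) + t \<in> I" using insert.hyps by (simp add: add.assoc)
  qed
qed

lemma B_set_subset_A_set: "B_set I \<subseteq> A_set I"
proof
  fix \<omega> assume "\<omega> \<in> B_set I"
  then have coord: "\<omega> $ j \<noteq> 0" "(\<lambda>t. (\<omega> $ j) *\<^sub>R axis j 1 + t) ` I \<subseteq> I" for j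
    unfolding B_set_def by auto
  have "\<omega> \<noteq> 0" using coord(1)[of undefined] by auto
  moreover have "(\<lambda>t. (\<Sum>j\<in>UNIV. (\<omega> $ j) *\<^sub>R axis j 1) + t) ` I \<subseteq> I"
    using coord(2) by (intro translate_closed_sum) auto
  then have "(\<lambda>t. \<omega> + t) ` I \<subseteq> I"
    using basis_expansion[of \<omega>] by (simp add: scalar_mult_eq_scaleR)
  ultimately show "\<omega> \<in> A_set I" unfolding A_set_def by blast
qed

lemma mult_N_subset_A_set:
  assumes "\<omega> \<in> A_set I"
  shows "mult_N \<omega> \<subseteq> A_set I"
proof
  fix \<tau> assume "\<tau> \<in> mult_N \<omega>"
  then obtain k :: nat where "k \<ge> 1" "\<tau> = real k *\<^sub>R \<omega>" unfolding mult_N_def by blast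
  with assms show "\<tau> \<in> A_set I"
    using translate_closed_scaleR_nat[of \<omega> I k] unfolding A_set_def by auto
qed

lemma mult_N_subset_B_set:
  assumes "\<omega> \<in> B_set I"
  shows "mult_N \<omega> \<subseteq> B_set I"
proof
  fix \<tau> assume "\<tau> \<in> mult_N \<omega>"
  then obtain k :: nat where "k \<ge> 1" "\<tau> = real k *\<^sub>R \<omega>" unfolding mult_N_def by blast
  moreover have "(\<lambda>t. real k *\<^sub>R ((\<omega> $ j) *\<^sub>R axis j 1) + t) ` I \<subseteq> I" for j
    using assms translate_closed_scaleR_nat unfolding B_set_def by blast
  ultimately show "\<tau> \<in> B_set I" using assms unfolding B_set_def by simp
qed

lemma unbounded_mult_N:
  assumes "\<omega> \<noteq> 0"
  shows "\<not> bounded (mult_N \<omega>)"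
proof
  assume "bounded (mult_N \<omega>)"
  then obtain e where e: "\<And>\<tau>. \<tau> \<in> mult_N \<omega> \<Longrightarrow> norm \<tau> \<le> e"
    unfolding bounded_iff by blast
  obtain k :: nat where k: "e / norm \<omega> < real k" using reals_Archimedean2 by blast
  have "real (Suc k) *\<^sub>R \<omega> \<in> mult_N \<omega>"
    unfolding mult_N_def by (intro CollectI exI[of _ "Suc k"]) simp
  then have "real (Suc k) * norm \<omega> \<le> e" using e by fastforce
  moreover have "e < real k * norm \<omega>" using k assms by (simp add: field_simps)
  moreover have "0 < norm \<omega>" using assms by simp
  ultimately show False by (simp add: distrib_right)
qed

lemma unbounded_UN_mult_N:
  assumes "S \<subseteq> A_set I" "S \<noteq> {}"
  shows "\<not> bounded (\<Union>\<omega>\<in>S. mult_N \<omega>)"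
proof -
  obtain \<omega> where "\<omega> \<in> S" using assms(2) by blast
  moreover from this assms(1) have "\<omega> \<noteq> 0" by (auto simp: A_set_def)
  ultimately have "mult_N \<omega> \<subseteq> (\<Union>\<omega>\<in>S. mult_N \<omega>)" "\<not> bounded (mult_N \<omega>)"
    using unbounded_mult_N by auto
  then show ?thesis using bounded_subset by blast
qed

lemma translate_UN_mult_N_closed:
  assumes "S \<subseteq> A_set I" "t \<in> I" "\<tau> \<in> (\<Union>\<omega>\<in>S. mult_N \<omega>)"
  shows "t + \<tau> \<in> I"
proof -
  obtain \<omega> where "\<omega> \<in> S" "\<tau> \<in> mult_N \<omega>" using assms(3) by blast
  then have "\<tau> \<in> A_set I" using assms(1) mult_N_subset_A_set by blast
  then have "\<tau> + t \<in> I" using assms(2) unfolding A_set_def by blast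
  then show ?thesis by (simp add: add.commute)
qed

lemma norm_diff_shift_sum_le:
  fixes G :: "'a::real_vector \<Rightarrow> 'y::real_normed_vector" and v :: "'i::linorder \<Rightarrow> 'a"
  assumes "finite S"
    and "\<And>j. j \<in> S \<Longrightarrow>
      norm (G (t + sum v {i\<in>S. j < i} + v j) - G (t + sum v {i\<in>S. j < i})) \<le> \<delta>"
  shows "norm (G (t + sum v S) - G t) \<le> real (card S) * \<delta>"
  using assms
proof (induction S rule: finite_linorder_min_induct)
  case empty
  then show ?case by simp
next
  case (insert b A)
  have "b \<notin> A" using insert.hyps(2) by blast
  have "norm (G (t + sum v A) - G t) \<le> real (card A) * \<delta>"
  proof (rule insert.IH)
    fix j assume "j \<in> A"
    then have "{i \<in> insert b A. j < i} = {i \<in> A. j < i}"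
      using insert.hyps(2) by auto
    then show "norm (G (t + sum v {i\<in>A. j < i} + v j) - G (t + sum v {i\<in>A. j < i})) \<le> \<delta>"
      using insert.prems[of j] \<open>j \<in> A\<close> by simp
  qed
  moreover have "norm (G (t + sum v A + v b) - G (t + sum v A)) \<le> \<delta>"
  proof -
    have "{i \<in> insert b A. b < i} = A" using insert.hyps(2) by auto
    then show ?thesis using insert.prems[of b] by simp
  qed
  moreover have "G (t + sum v (insert b A)) - G t
      = (G (t + sum v A + v b) - G (t + sum v A)) + (G (t + sum v A) - G t)"
    using insert.hyps(1) \<open>b \<notin> A\<close> by (simp add: algebra_simps)
  then have "norm (G (t + sum v (insert b A)) - G t)
      \<le> norm (G (t + sum v A + v b) - G (t + sum v A)) + norm (G (t + sum v A) - G t)"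
    by (metis norm_triangle_ineq)
  ultimately show ?case
    using insert.hyps(1) \<open>b \<notin> A\<close> by (simp add: algebra_simps)
qed

lemma slowly_osc_Dj_shift_small:
  fixes F :: "real ^ 'n::{finite,linorder} \<Rightarrow> 'x::real_normed_vector \<Rightarrow> 'y::real_normed_vector"
  assumes osc: "slowly_osc_Dj I Dj \<B> F" and "B \<in> \<B>" "\<tau> \<in> B_set I" "0 < \<epsilon>"
  shows "\<exists>M. \<forall>t x. (\<forall>j. t + (\<Sum>i\<in>{j<..}. (\<tau> $ i) *\<^sub>R axis i 1) \<in> Dj j) \<and> M \<le> norm t \<and> x \<in> B
           \<longrightarrow> norm (F (t + \<tau>) x - F t x) \<le> \<epsilon>"
proof -
  define v where "v i = (\<tau> $ i) *\<^sub>R axis i (1::real)" for i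
  define \<delta> where "\<delta> = \<epsilon> / real CARD('n)"
  have "0 < \<delta>" unfolding \<delta>_def using \<open>0 < \<epsilon>\<close> by simp
  then have "\<forall>j. \<exists>M. \<forall>t\<in>Dj j. \<forall>x\<in>B. M \<le> norm t \<longrightarrow> norm (F (t + v j) x - F t x) < \<delta>"
    using osc assms(2,3) unfolding slowly_osc_Dj_def v_def by blast
  then obtain M where M: "\<And>j t x. t \<in> Dj j \<Longrightarrow> x \<in> B \<Longrightarrow> M j \<le> norm t \<Longrightarrow>
      norm (F (t + v j) x - F t x) < \<delta>"
    by metis
  define C where "C = (\<Sum>i\<in>UNIV. norm (v i))"
  have tail_le: "norm (sum v {j<..}) \<le> C" for j
    using norm_sum[of v "{j<..}"] sum_mono2[of UNIV "{j<..}" "\<lambda>i. norm (v i)"]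
    unfolding C_def by force
  show ?thesis
  proof (intro exI[of _ "Max (range M) + C"] allI impI)
    fix t x
    assume H: "(\<forall>j. t + (\<Sum>i\<in>{j<..}. (\<tau> $ i) *\<^sub>R axis i 1) \<in> Dj j) \<and> Max (range M) + C \<le> norm t \<and> x \<in> B"
    have step: "norm (F (t + sum v {j<..} + v j) x - F (t + sum v {j<..}) x) \<le> \<delta>" for j
    proof -
      \<comment> \<open>The partial sums stay within distance C of t, so they are far out as well.\<close>
      have "M j \<le> Max (range M)" by simp
      moreover have "norm t \<le> norm (t + sum v {j<..}) + norm (sum v {j<..})"
        by (metis add_diff_cancel_right' norm_triangle_ineq4)
      ultimately have "M j \<le> norm (t + sum v {j<..})" using H tail_le[of j] by linarith
      then show ?thesis using M[of "t + sum v {j<..}" j x] H unfolding v_def by fastforce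
    qed
    have "norm (F (t + sum v UNIV) x - F t x) \<le> real CARD('n) * \<delta>"
      using norm_diff_shift_sum_le[of UNIV "\<lambda>s. F s x" t v \<delta>] step
      by (simp add: greaterThan_def)
    moreover have "sum v UNIV = \<tau>"
      using basis_expansion[of \<tau>] unfolding v_def by (simp add: scalar_mult_eq_scaleR)
    ultimately show "norm (F (t + \<tau>) x - F t x) \<le> \<epsilon>" unfolding \<delta>_def by simp
  qed
qed

lemma quasi_asymp_ap_oneI:
  fixes F :: "real ^ 'n \<Rightarrow> 'x::real_normed_vector \<Rightarrow> 'y::real_normed_vector"
  assumes "D \<subseteq> I" "\<not> bounded D" "\<not> bounded I'" "\<forall>t\<in>I. \<forall>s\<in>I'. t + s \<in> I" "cont_IX I F"
    and small: "\<And>B \<epsilon> \<tau>. B \<in> \<B> \<Longrightarrow> 0 < \<epsilon> \<Longrightarrow> \<tau> \<in> I' \<Longrightarrow>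
      \<exists>M. \<forall>t x. t \<in> D \<and> M \<le> norm t \<and> t + \<tau> \<in> D \<and> x \<in> B \<longrightarrow> norm (F (t + \<tau>) x - F t x) \<le> \<epsilon>"
  shows "quasi_asymp_ap I D \<B> I' 1 F"
proof -
  have "\<exists>\<tau>\<in>ball t0 1 \<inter> I'. \<exists>M>0. \<forall>t x. t \<in> D \<and> M \<le> norm t \<and> t + \<tau> \<in> D \<and> M \<le> norm (t + \<tau>) \<and> x \<in> B
          \<longrightarrow> norm (F (t + \<tau>) x - 1 *\<^sub>R F t x) \<le> \<epsilon>"
    if hyps: "B \<in> \<B>" "0 < \<epsilon>" "t0 \<in> I'" for B \<epsilon> t0
  proof -
    obtain M where M: "\<forall>t x. t \<in> D \<and> M \<le> norm t \<and> t + t0 \<in> D \<and> x \<in> B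
        \<longrightarrow> norm (F (t + t0) x - F t x) \<le> \<epsilon>"
      using small[OF hyps] by blast
    show ?thesis
    proof (intro bexI[of _ t0] exI[of _ "max M 1"] conjI allI impI)
      fix t x
      assume "t \<in> D \<and> max M 1 \<le> norm t \<and> t + t0 \<in> D \<and> max M 1 \<le> norm (t + t0) \<and> x \<in> B"
      then show "norm (F (t + t0) x - 1 *\<^sub>R F t x) \<le> \<epsilon>" using M by simp
    qed (use hyps(3) in auto)
  qed
  then have "\<forall>B\<in>\<B>. \<forall>\<epsilon>>0. \<exists>l>0. \<forall>t0\<in>I'. \<exists>\<tau>\<in>ball t0 l \<inter> I'. \<exists>M>0.
      \<forall>t x. t \<in> D \<and> M \<le> norm t \<and> t + \<tau> \<in> D \<and> M \<le> norm (t + \<tau>) \<and> x \<in> B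
        \<longrightarrow> norm (F (t + \<tau>) x - 1 *\<^sub>R F t x) \<le> \<epsilon>"
    by (intro ballI allI impI exI[of _ 1] conjI) auto
  with assms(1-5) show ?thesis unfolding quasi_asymp_ap_def by blast
qed

lemma slowly_osc_D_quasi_asymp_ap:
  fixes F :: "real ^ 'n \<Rightarrow> 'x::real_normed_vector \<Rightarrow> 'y::real_normed_vector"
  assumes "D \<subseteq> I" "\<not> bounded D" "A_set I \<noteq> {}" and osc: "slowly_osc_D I D \<B> F"
  shows "quasi_asymp_ap I D \<B> (\<Union>\<omega>\<in>A_set I. mult_N \<omega>) 1 F"
proof (rule quasi_asymp_ap_oneI)
  fix B and \<epsilon> :: real and \<tau> assume "B \<in> \<B>" "0 < \<epsilon>" "\<tau> \<in> (\<Union>\<omega>\<in>A_set I. mult_N \<omega>)"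
  moreover from this have "\<tau> \<in> A_set I" using mult_N_subset_A_set by blast
  ultimately obtain M where "\<forall>t\<in>D. \<forall>x\<in>B. M \<le> norm t \<longrightarrow> norm (F (t + \<tau>) x - F t x) < \<epsilon>"
    using osc unfolding slowly_osc_D_def by blast
  then show "\<exists>M. \<forall>t x. t \<in> D \<and> M \<le> norm t \<and> t + \<tau> \<in> D \<and> x \<in> B \<longrightarrow> norm (F (t + \<tau>) x - F t x) \<le> \<epsilon>"
    by (meson less_imp_le)
next
  show "\<not> bounded (\<Union>\<omega>\<in>A_set I. mult_N \<omega>)"
    using unbounded_UN_mult_N assms(3) by blast
  show "\<forall>t\<in>I. \<forall>s\<in>(\<Union>\<omega>\<in>A_set I. mult_N \<omega>). t + s \<in> I"
    using translate_UN_mult_N_closed by blast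
  show "cont_IX I F" using osc unfolding slowly_osc_D_def by blast
qed (use assms in blast)+

lemma slowly_osc_Dj_quasi_asymp_ap:
  fixes F :: "real ^ 'n::{finite,linorder} \<Rightarrow> 'x::real_normed_vector \<Rightarrow> 'y::real_normed_vector"
  assumes \<D>_def: "\<D> = (\<Inter>\<omega>\<in>B_set I. {t \<in> Dj (Max UNIV).
      \<forall>j. j \<noteq> Max UNIV \<longrightarrow> t + (\<Sum>i\<in>{j<..}. (\<omega> $ i) *\<^sub>R axis i 1) \<in> Dj j})"
    and "Dj (Max UNIV) \<subseteq> I" "\<not> bounded \<D>" "B_set I \<inter> I \<noteq> {}"
    and osc: "slowly_osc_Dj I Dj \<B> F"
  shows "quasi_asymp_ap I \<D> \<B> (\<Union>\<omega>\<in>B_set I \<inter> I. mult_N \<omega>) 1 F"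
proof (rule quasi_asymp_ap_oneI)
  have tails: "t + (\<Sum>i\<in>{j<..}. (\<omega> $ i) *\<^sub>R axis i 1) \<in> Dj j"
    if "t \<in> \<D>" "\<omega> \<in> B_set I" for t \<omega> j
  proof -
    have "t \<in> Dj (Max UNIV)"
      and "\<forall>j. j \<noteq> Max UNIV \<longrightarrow> t + (\<Sum>i\<in>{j<..}. (\<omega> $ i) *\<^sub>R axis i 1) \<in> Dj j"
      using that by (simp_all add: \<D>_def)
    moreover have "{Max UNIV<..} = ({} :: 'n set)" by (auto simp: not_less)
    ultimately show ?thesis by (cases "j = Max UNIV") simp_all
  qed
  fix B and \<epsilon> :: real and \<tau> assume "B \<in> \<B>" "0 < \<epsilon>" "\<tau> \<in> (\<Union>\<omega>\<in>B_set I \<inter> I. mult_N \<omega>)"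
  moreover from this have "\<tau> \<in> B_set I" using mult_N_subset_B_set by blast
  ultimately obtain M where M: "\<forall>t x. (\<forall>j. t + (\<Sum>i\<in>{j<..}. (\<tau> $ i) *\<^sub>R axis i 1) \<in> Dj j)
      \<and> M \<le> norm t \<and> x \<in> B \<longrightarrow> norm (F (t + \<tau>) x - F t x) \<le> \<epsilon>"
    using slowly_osc_Dj_shift_small[OF osc] by blast
  show "\<exists>M. \<forall>t x. t \<in> \<D> \<and> M \<le> norm t \<and> t + \<tau> \<in> \<D> \<and> x \<in> B \<longrightarrow> norm (F (t + \<tau>) x - F t x) \<le> \<epsilon>"
  proof (intro exI[of _ M] allI impI)
    fix t x assume "t \<in> \<D> \<and> M \<le> norm t \<and> t + \<tau> \<in> \<D> \<and> x \<in> B"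
    then show "norm (F (t + \<tau>) x - F t x) \<le> \<epsilon>"
      using M tails[of t \<tau>] \<open>\<tau> \<in> B_set I\<close> by blast
  qed
next
  obtain \<omega> where "\<omega> \<in> B_set I" using assms(4) by blast
  then have "\<D> \<subseteq> Dj (Max UNIV)" unfolding \<D>_def by blast
  then show "\<D> \<subseteq> I" using assms(2) by blast
  have "B_set I \<inter> I \<subseteq> A_set I" using B_set_subset_A_set by blast
  then show "\<not> bounded (\<Union>\<omega>\<in>B_set I \<inter> I. mult_N \<omega>)"
    and "\<forall>t\<in>I. \<forall>s\<in>(\<Union>\<omega>\<in>B_set I \<inter> I. mult_N \<omega>). t + s \<in> I"
    using unbounded_UN_mult_N assms(4) translate_UN_mult_N_closed by blast+
  show "cont_IX I F" using osc unfolding slowly_osc_Dj_def by blast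
qed (use assms in blast)

theorem proposition3p7:
  fixes I :: "(real ^ 'n::{finite,linorder}) set"
    and \<B> :: "'x::banach set set"
    and F :: "real ^ ('n::{finite,linorder}) \<Rightarrow> 'x \<Rightarrow> 'y::banach"
  assumes I_ne: "I \<noteq> {}"
    and B_ne: "\<forall>B\<in>\<B>. B \<noteq> {}"
    and B_cover: "\<Union>\<B> = UNIV"
  shows
   "(\<forall>D. D \<subseteq> I \<and> \<not> bounded D \<and> A_set I \<noteq> {} \<and> slowly_osc_D I D \<B> F \<longrightarrow>
        quasi_asymp_ap I D \<B> (\<Union>\<omega>\<in>A_set I. mult_N \<omega>) 1 F)
    \<and>
    (\<forall>Dj :: ('n::{finite,linorder}) \<Rightarrow> (real ^ 'n::{finite,linorder}) set.
       let Dw = (\<lambda>\<omega>. {t \<in> Dj (Max UNIV).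
                     \<forall>j. j \<noteq> Max UNIV \<longrightarrow>
                       t + (\<Sum>i\<in>{j<..}. (\<omega> $ i) *\<^sub>R axis i 1) \<in> Dj j});
           \<D> = (\<Inter>\<omega>\<in>B_set I. Dw \<omega>)
       in (\<forall>j. Dj j \<subseteq> I \<and> \<not> bounded (Dj j)) \<and>
          (\<forall>\<omega>\<in>B_set I. \<not> bounded (Dw \<omega>)) \<and> \<not> bounded \<D> \<and>
          B_set I \<inter> I \<noteq> {} \<and> slowly_osc_Dj I Dj \<B> F \<longrightarrow>
          quasi_asymp_ap I \<D> \<B> (\<Union>\<omega>\<in>B_set I \<inter> I. mult_N \<omega>) 1 F)"
  unfolding Let_def
  by (intro conjI allI impI; elim conjE;
      rule slowly_osc_D_quasi_asymp_ap slowly_osc_Dj_quasi_asymp_ap[OF refl]; auto)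

end
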